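(* Under the assumptions below, with $\varrho=h^{2\alpha}$, let $y_{\varrho h}\in Y_h$ be the Galerkin solution, let $\widetilde{u}_{\varrho h}\in U_h$ be the unique solution of $\langle\widetilde{u}_{\varrho h},x_h\rangle_{X^*,X}=\langle By_{\varrho h},x_h\rangle_{X^*,X}$ for all $x_h\in X_h$, and let $\widetilde{y}_\varrho:=B^{-1}\widetilde{u}_{\varrho h}\in Y$. Then there is a constant $c>0$ independent of $h$ and $\overline{y}$ such that $$\|\widetilde{y}_\varrho-\overline{y}\|_{H_Y}\le c\,\|\overline{y}\|_{H_Y}\quad\text{for }\overline{y}\in H_Y,\qquad \|\widetilde{y}_\varrho-\overline{y}\|_{H_Y}\le c\,h^\alpha\|\overline{y}\|_Y\quad\text{for }\overline{y}\in Y.$$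
   Context: Abstract setting: Let $X\subset H_X\subset X^*$ and $Y\subset H_Y\subset Y^*$ be Gelfand triples of real Hilbert spaces, where the duality pairings $\langle\cdot,\cdot\rangle_{X^*,X}$ and $\langle\cdot,\cdot\rangle_{Y^*,Y}$ extend the inner products of $H_X$, $H_Y$. Let $B:Y\to X^*$ be a bounded linear isomorphism with adjoint $B^*:X\to Y^*$, $\langle By,x\rangle_{X^*,X}=\langle y,B^*x\rangle_{Y,Y^*}$. Let $D:Y\to Y^*$ be bounded, linear, self-adjoint and elliptic, $\|y\|_D:=\langle Dy,y\rangle_{Y^*,Y}^{1/2}$ (an equivalent norm on $Y$). Given $\overline{y}\in H_Y$ and $\varrho>0$, $y_\varrho\in Y$ is the unique solution of $\langle y_\varrho,y\rangle_{H_Y}+\varrho\langle Dy_\varrho,y\rangle_{Y^*,Y}=\langle\overline{y},y\rangle_{H_Y}$ for all $y\in Y$. Discretization: for each $h\in(0,h_0]$, $Y_h\subset Y$ is finite-dimensional and there are maps $P_h:Y\to Y_h$, $\alpha>0$ and $c_1,c_2>0$ independent of $h$ with $\|y-P_hy\|_{H_Y}\le c_1h^\alpha\|y\|_D$ and $\|y-P_hy\|_D\le c_2\|y\|_D$ for all $y\in Y$; $y_{\varrho h}\in Y_h$ satisfies $\langle y_{\varrho h},y_h\rangle_{H_Y}+\varrho\langle Dy_{\varrho h},y_h\rangle_{Y^*,Y}=\langle\overline{y},y_h\rangle_{H_Y}$ for all $y_h\in Y_h$. Further, $U_h\subset X^*$ and $X_h\subset X$ are finite-dimensional subspaces with $\dim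 U_h=\dim X_h$, satisfying the discrete inf-sup condition $c_S\|u_h\|_{X^*}\le\sup_{0\ne x_h\in X_h}\langle u_h,x_h\rangle_{X^*,X}/\|x_h\|_X$ for all $u_h\in U_h$ with $c_S>0$ independent of $h$, and there are maps $\Pi_h:X\to X_h$ with $\|x-\Pi_hx\|_X\le c\,h^\alpha\|B^*x\|_{H_Y}$ for all $x\in X$ with $B^*x\in H_Y$, $c$ independent of $h$. *)

theory Defs
  imports "HOL-Analysis.Analysis"
begin

text \<open>Continuous, injective, dense embedding of a Hilbert space V into a pivot
  Hilbert space H (first half of a Gelfand triple V \<subseteq> H \<subseteq> V*; the dual V*
  is modelled as the space of bounded linear functionals V \<Rightarrow>L real, and the
  element h of H acts on V by the functional v \<mapsto> inner h (J v)).\<close>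
definition gelfand_embedding :: "('v::real_normed_vector \<Rightarrow> 'h::real_inner) \<Rightarrow> bool" where
  "gelfand_embedding J \<longleftrightarrow> bounded_linear J \<and> inj J \<and> closure (range J) = UNIV"

definition fd_subspace :: "'a::real_vector set \<Rightarrow> bool" where
  "fd_subspace S \<longleftrightarrow> subspace S \<and> (\<exists>A. finite A \<and> S = span A)"

definition Dnorm :: "('y::real_normed_vector \<Rightarrow> 'y \<Rightarrow>\<^sub>L real) \<Rightarrow> 'y \<Rightarrow> real" where
  "Dnorm D y = sqrt (blinfun_apply (D y) y)"

end

(*
  The reconstruction B\<^sup>-\<^sup>1 u differs from the Galerkin solution y by an error e whose
  image B e vanishes on X_h. An Aubin-Nitsche duality argument bounds it: by surjectivity of
  B\<^sup>* the functional (J e, J -) is B\<^sup>* x for some x, and subtracting Pi_h x gives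
  |J e|\<^sup>2 = (B e)(x - Pi_h x) <= c h\<^sup>\<alpha> |B e| |J e|, while the discrete inf-sup condition
  bounds |B e| by c |y|_Y.  It remains to control h\<^sup>\<alpha> |y|_Y, which is where \<rho> = h\<^sup>2\<^sup>\<alpha>
  enters. For rough data, testing the Galerkin equation with y gives h\<^sup>\<alpha> |y|_D <= |ybar|.
  For ybar = J yb, testing the error equation with y - P_h yb and absorbing yields
  |J (y - yb)| + h\<^sup>\<alpha> |y - yb|_D <= c h\<^sup>\<alpha> |yb|_D.
*)

theory Submission
  imports Defs
begin

section \<open>Riesz representation\<close>

text \<open>A bounded functional attains its supremum on the unit ball because, by the parallelogram
  law, maximising sequences are Cauchy; it then vanishes on the orthogonal complement of the
  maximiser.\<close>

lemma near_maximisers_close: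
  fixes f :: "'a::real_inner \<Rightarrow> real"
  assumes f: "bounded_linear f" and M: "M > 0" "\<And>x. f x \<le> M * norm x"
    and a: "norm a \<le> 1" "M - d \<le> f a" and b: "norm b \<le> 1" "M - d' \<le> f b"
  shows "(norm (a - b))\<^sup>2 \<le> 4 * (d + d') / M"
proof -
  interpret f: bounded_linear f by (fact f)
  have parallelogram: "(norm (a - b))\<^sup>2 + (norm (a + b))\<^sup>2 = 2 * (norm a)\<^sup>2 + 2 * (norm b)\<^sup>2"
    by (simp add: power2_norm_eq_inner algebra_simps inner_commute)
  have "2 * M - (d + d') \<le> M * norm (a + b)"
    using M(2)[of "a + b"] a(2) b(2) by (simp add: f.add)
  then have sum_large: "2 - (d + d') / M \<le> norm (a + b)"
    using M(1) by (simp add: field_simps)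
  have "4 - 4 * q \<le> r\<^sup>2" if "2 - q \<le> r" "0 \<le> r" for q r :: real
  proof (cases "q \<le> 2")
    case True
    then have "(2 - q)\<^sup>2 \<le> r\<^sup>2" using that by (intro power_mono) auto
    moreover have "(2 - q)\<^sup>2 = 4 - 4 * q + q\<^sup>2"
      by (simp add: power2_diff)
    ultimately show ?thesis
      using zero_le_power2[of q] by linarith
  qed (use that zero_le_power2[of r] in linarith)
  from this[OF sum_large norm_ge_zero]
  have "4 - 4 * ((d + d') / M) \<le> (norm (a + b))\<^sup>2" .
  moreover have "(norm a)\<^sup>2 \<le> 1" "(norm b)\<^sup>2 \<le> 1"
    using a(1) b(1) by (simp_all add: power_le_one)
  ultimately show ?thesis
    using parallelogram by simp
qed

lemma bounded_linear_functional_sup_unit_ball: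
  fixes f :: "'a::real_normed_vector \<Rightarrow> real"
  assumes f: "bounded_linear f"
  obtains M where "0 \<le> M" "\<And>y. f y \<le> M * norm y"
    "\<And>e. 0 < e \<Longrightarrow> \<exists>x. norm x \<le> 1 \<and> M - e < f x"
proof -
  interpret f: bounded_linear f by (fact f)
  obtain K where K: "\<And>x. norm (f x) \<le> norm x * K" "0 < K"
    using f.pos_bounded by blast
  define S where "S = f ` {x. norm x \<le> 1}"
  have "0 \<in> S" unfolding S_def by (auto intro!: image_eqI[of _ _ 0])
  have "bdd_above S"
  proof (rule bdd_aboveI)
    fix t assume "t \<in> S"
    then obtain x where "norm x \<le> 1" "t = f x" unfolding S_def by blast
    moreover have "norm x * K \<le> 1 * K"
      using \<open>norm x \<le> 1\<close> K(2) by (intro mult_right_mono) auto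
    ultimately show "t \<le> K"
      using K(1)[of x] by auto
  qed
  have le_Sup: "f x \<le> Sup S" if "norm x \<le> 1" for x
    using \<open>bdd_above S\<close> that by (auto intro!: cSup_upper simp: S_def)
  show thesis
  proof
    show "0 \<le> Sup S" using le_Sup[of 0] by simp
    show "f y \<le> Sup S * norm y" for y
    proof (cases "y = 0")
      case False
      have "f (y /\<^sub>R norm y) \<le> Sup S" by (rule le_Sup) (simp add: False)
      then show ?thesis using False by (simp add: f.scaleR field_simps)
    qed (simp add: f.zero)
    show "\<exists>x. norm x \<le> 1 \<and> Sup S - e < f x" if "0 < e" for e
    proof -
      have "Sup S - e < Sup S" using that by simp
      from less_cSupD[OF _ this] \<open>0 \<in> S\<close> show ?thesis unfolding S_def by auto
    qed
  qed
qed

lemma maximising_sequence_Cauchy: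
  fixes f :: "'a::real_inner \<Rightarrow> real"
  assumes f: "bounded_linear f" and M: "0 < M" "\<And>x. f x \<le> M * norm x"
    and xs: "\<And>n. norm (xs n) \<le> 1" "\<And>n. M - d n \<le> f (xs n)" and "d \<longlonglongrightarrow> 0"
  shows "Cauchy xs"
proof (rule CauchyI)
  fix e :: real assume "0 < e"
  then have "\<forall>\<^sub>F n in sequentially. d n < M * e\<^sup>2 / 8"
    using \<open>d \<longlonglongrightarrow> 0\<close> M(1) by (intro order_tendstoD) auto
  then obtain N where N: "\<And>n. N \<le> n \<Longrightarrow> d n < M * e\<^sup>2 / 8"
    unfolding eventually_sequentially by blast
  have "norm (xs m - xs n) < e" if "N \<le> m" "N \<le> n" for m n
  proof -
    have "(norm (xs m - xs n))\<^sup>2 \<le> 4 * (d m + d n) / M"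
      using xs(1)[of m] xs(2)[of m] xs(1)[of n] xs(2)[of n] by (rule near_maximisers_close[OF f M])
    also have "\<dots> < e\<^sup>2"
      using N[OF that(1)] N[OF that(2)] M(1) by (simp add: field_simps)
    finally show ?thesis
      using \<open>0 < e\<close> by (simp add: power_less_imp_less_base)
  qed
  then show "\<exists>N. \<forall>m\<ge>N. \<forall>n\<ge>N. norm (xs m - xs n) < e" by blast
qed

lemma bounded_linear_functional_attains_sup:
  fixes f :: "'a::{real_inner,complete_space} \<Rightarrow> real"
  assumes f: "bounded_linear f"
  obtains x where "norm x \<le> 1" "\<And>y. f y \<le> f x * norm y"
proof -
  obtain M where M: "0 \<le> M" "\<And>y. f y \<le> M * norm y"
    and approx: "\<And>e. 0 < e \<Longrightarrow> \<exists>x. norm x \<le> 1 \<and> M - e < f x"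
    using bounded_linear_functional_sup_unit_ball[OF f] by blast
  show thesis
  proof (cases "M = 0")
    case True
    then show thesis using M(2) that[of 0] by (simp add: linear_simps[OF f])
  next
    case False
    with M(1) have "0 < M" by simp
    define d :: "nat \<Rightarrow> real" where "d n = 1 / Suc n" for n
    have "d \<longlonglongrightarrow> 0" unfolding d_def by (rule LIMSEQ_Suc[OF lim_inverse_n'])
    have "\<forall>n. \<exists>x. norm x \<le> 1 \<and> M - d n < f x"
      using approx by (simp add: d_def)
    then obtain xs where xs: "\<And>n. norm (xs n) \<le> 1" "\<And>n. M - d n \<le> f (xs n)"
      by (metis less_imp_le)
    have "Cauchy xs"
      using f \<open>0 < M\<close> M(2) xs \<open>d \<longlonglongrightarrow> 0\<close> by (rule maximising_sequence_Cauchy)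
    then obtain x where lim: "xs \<longlonglongrightarrow> x"
      using Cauchy_convergent convergent_def by blast
    have "norm x \<le> 1"
      using tendsto_norm[OF lim] xs(1) by (auto intro: LIMSEQ_le_const2)
    moreover have "M \<le> f x"
    proof (rule LIMSEQ_le)
      show "(\<lambda>n. M - d n) \<longlonglongrightarrow> M"
        using tendsto_diff[OF tendsto_const \<open>d \<longlonglongrightarrow> 0\<close>] by simp
      show "(\<lambda>n. f (xs n)) \<longlonglongrightarrow> f x"
        using bounded_linear.tendsto[OF f lim] .
    qed (use xs(2) in blast)
    moreover have "f x \<le> M"
      using M(2)[of x] mult_left_le[OF \<open>norm x \<le> 1\<close> M(1)] by linarith
    ultimately show thesis
      using M(2) that by simp
  qed
qed

text \<open>Moving the maximiser orthogonally raises its norm only to second order.\<close>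

lemma maximiser_orthogonal_perturbation:
  fixes f :: "'a::real_inner \<Rightarrow> real"
  assumes f: "bounded_linear f" and x: "norm x \<le> 1" "\<And>y. f y \<le> f x * norm y" "0 \<le> f x"
    and "inner x v = 0" "0 < t"
  shows "2 * f v \<le> t * (f x * (norm v)\<^sup>2)"
proof -
  interpret f: bounded_linear f by (fact f)
  let ?w = "x + t *\<^sub>R v"
  have "orthogonal x (t *\<^sub>R v)"
    using \<open>inner x v = 0\<close> by (simp add: orthogonal_def)
  then have "(norm ?w)\<^sup>2 \<le> 1 + t\<^sup>2 * (norm v)\<^sup>2"
    using power_le_one[OF norm_ge_zero x(1), of 2]
    by (simp add: norm_add_Pythagorean power_mult_distrib)
  moreover have "2 * norm ?w \<le> 1 + (norm ?w)\<^sup>2"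
    using zero_le_power2[of "norm ?w - 1"] by (simp add: power2_diff)
  ultimately have "f x * (2 * norm ?w) \<le> f x * (2 + t\<^sup>2 * (norm v)\<^sup>2)"
    using x(3) by (intro mult_left_mono) auto
  then have "2 * f ?w \<le> f x * (2 + t\<^sup>2 * (norm v)\<^sup>2)"
    using x(2)[of ?w] by linarith
  then have "t * (2 * f v) \<le> t * (t * (f x * (norm v)\<^sup>2))"
    by (simp add: f.add f.scaleR algebra_simps power2_eq_square)
  then show ?thesis
    using \<open>0 < t\<close> by simp
qed

lemma functional_zero_orthogonal_to_maximiser:
  fixes f :: "'a::real_inner \<Rightarrow> real"
  assumes f: "bounded_linear f" and x: "norm x \<le> 1" "\<And>y. f y \<le> f x * norm y"
    and "inner x u = 0"
  shows "f u = 0"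
proof -
  have "f v \<le> 0" if v: "inner x v = 0" for v
  proof (cases "f x \<le> 0")
    case True
    then show ?thesis using x(2)[of v] mult_nonpos_nonneg[of "f x" "norm v"] by simp
  next
    case False
    then have "0 \<le> f x" by simp
    define C where "C = f x * (norm v)\<^sup>2"
    have "0 \<le> C" using \<open>0 \<le> f x\<close> by (simp add: C_def)
    have "2 * f v \<le> 0"
    proof (rule field_le_epsilon)
      fix e :: real assume "0 < e"
      have "0 < e / (C + 1)"
        using \<open>0 < e\<close> \<open>0 \<le> C\<close> by simp
      from maximiser_orthogonal_perturbation[OF f x \<open>0 \<le> f x\<close> v this]
      have "2 * f v \<le> e / (C + 1) * C"
        by (simp add: C_def)
      also have "\<dots> \<le> e"
        using \<open>0 < e\<close> \<open>0 \<le> C\<close> by (simp add: field_simps)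
      finally show "2 * f v \<le> 0 + e" by simp
    qed
    then show ?thesis by simp
  qed
  from this[of u] this[of "- u"] \<open>inner x u = 0\<close> show ?thesis
    by (simp add: linear_simps[OF f])
qed

lemma riesz_representation:
  fixes f :: "'a::{real_inner,complete_space} \<Rightarrow> real"
  assumes f: "bounded_linear f"
  obtains r where "\<And>v. f v = inner r v"
proof -
  interpret f: bounded_linear f by (fact f)
  obtain x where x: "norm x \<le> 1" "\<And>y. f y \<le> f x * norm y"
    using bounded_linear_functional_attains_sup[OF f] by blast
  have "f v = inner ((f x / inner x x) *\<^sub>R x) v" for v
  proof -
    define u where "u = v - (inner x v / inner x x) *\<^sub>R x"
    have "inner x u = 0"
      by (cases "x = 0") (simp_all add: u_def inner_diff_right)
    then have "f u = 0"
      by (rule functional_zero_orthogonal_to_maximiser[OF f x])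
    then show ?thesis
      by (cases "x = 0") (simp_all add: u_def f.diff f.scaleR f.zero inner_commute)
  qed
  then show thesis by (rule that)
qed

lemma adjoint_surjective:
  fixes B :: "'y::real_normed_vector \<Rightarrow> ('x::{real_inner,complete_space} \<Rightarrow>\<^sub>L real)"
  assumes B: "bij B" "bounded_linear (inv B)" and g: "bounded_linear g"
  obtains x where "\<And>y. blinfun_apply (B y) x = g y"
proof -
  have "bounded_linear (\<lambda>z. g (inv B (blinfun_inner_left z)))"
    by (rule bounded_linear_compose[OF g bounded_linear_compose[OF B(2)]])
      (rule bounded_linear_blinfun_inner_left)
  then obtain x where x: "\<And>z. g (inv B (blinfun_inner_left z)) = inner x z"
    using riesz_representation by blast
  have "blinfun_apply (B y) x = g y" for y
  proof -
    obtain z where z: "\<And>v. blinfun_apply (B y) v = inner z v"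
      using riesz_representation[OF blinfun.bounded_linear_right] by blast
    have "B y = blinfun_inner_left z"
      by (rule blinfun_eqI) (simp add: z inner_commute)
    have "g y = g (inv B (B y))"
      using bij_is_inj[OF B(1)] by simp
    also have "\<dots> = inner x z"
      using x[of z] \<open>B y = blinfun_inner_left z\<close> by simp
    finally have "g y = inner x z" .
    then show ?thesis
      by (simp add: z inner_commute)
  qed
  then show thesis by (rule that)
qed

section \<open>Inf-sup stability and duality\<close>

lemma fd_subspace_dim_eq_0:
  assumes "fd_subspace S"
  shows "dim S = 0 \<longleftrightarrow> S \<subseteq> {0}"
proof
  assume "dim S = 0"
  obtain A where "finite A" "S = span A"
    using assms unfolding fd_subspace_def by blast
  moreover obtain C where "C \<subseteq> S" "independent C" "S \<subseteq> span C" "card C = dim S"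
    using basis_exists by blast
  ultimately have "finite C"
    using independent_span_bound by (metis span_superset subset_trans)
  with \<open>card C = dim S\<close> \<open>dim S = 0\<close> \<open>S \<subseteq> span C\<close> show "S \<subseteq> {0}"
    by simp
next
  assume "S \<subseteq> {0}"
  then show "dim S = 0"
    using dim_le_card[of S "{}"] by simp
qed

lemma inf_sup_norm_le:
  fixes U :: "('x::real_normed_vector \<Rightarrow>\<^sub>L real) set" and v :: "'x \<Rightarrow>\<^sub>L real"
  assumes "fd_subspace U" "dim U = dim X" "0 < cS"
    and inf_sup: "\<And>u. u \<in> U \<Longrightarrow> u \<noteq> 0 \<Longrightarrow> cS * norm u \<le> (SUP x\<in>X - {0}. blinfun_apply u x / norm x)"
    and "u \<in> U" "\<And>x. x \<in> X \<Longrightarrow> blinfun_apply u x = blinfun_apply v x"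
  shows "norm u \<le> norm v / cS"
proof (cases "u = 0")
  case False
  with \<open>u \<in> U\<close> have "\<not> U \<subseteq> {0}" by blast
  \<comment> \<open>\<open>dim U = dim X\<close> keeps the supremum from ranging over the empty set\<close>
  then have "\<not> X \<subseteq> {0}"
    using assms(1,2) fd_subspace_dim_eq_0 dim_le_card[of X "{}"] by fastforce
  then have "X - {0} \<noteq> {}" by blast
  have "cS * norm u \<le> (SUP x\<in>X - {0}. blinfun_apply u x / norm x)"
    using inf_sup \<open>u \<in> U\<close> False by blast
  also have "\<dots> \<le> norm v"
  proof (rule cSUP_least[OF \<open>X - {0} \<noteq> {}\<close>])
    fix x assume "x \<in> X - {0}"
    then have "u x \<le> norm v * norm x"
      using assms(6) norm_blinfun[of v x] by auto
    with \<open>x \<in> X - {0}\<close> show "u x / norm x \<le> norm v"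
      by (simp add: divide_le_eq)
  qed
  finally show ?thesis
    using \<open>0 < cS\<close> by (simp add: field_simps)
qed (use \<open>0 < cS\<close> in simp)

lemma duality_estimate:
  fixes B :: "'y::real_normed_vector \<Rightarrow> ('x::{real_inner,complete_space} \<Rightarrow>\<^sub>L real)"
    and J :: "'y \<Rightarrow> 'h::real_inner" and Pi :: "'x \<Rightarrow> 'x"
  assumes B: "bij B" "bounded_linear (inv B)" and J: "bounded_linear J"
    and approx: "\<And>x. Pi x \<in> X" "0 \<le> C"
      "\<And>x w. (\<forall>y. blinfun_apply (B y) x = inner w (J y)) \<Longrightarrow> norm (x - Pi x) \<le> C * norm w"
    and orth: "\<And>x. x \<in> X \<Longrightarrow> blinfun_apply (B e) x = 0"
  shows "norm (J e) \<le> C * norm (B e)"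
proof -
  obtain x where x: "\<And>y. blinfun_apply (B y) x = inner (J e) (J y)"
    using adjoint_surjective[OF B bounded_linear_compose[OF bounded_linear_inner_right J]] by blast
  have "norm (J e) * norm (J e) = blinfun_apply (B e) (x - Pi x)"
    using x[of e] orth[OF approx(1)]
    by (simp add: blinfun.diff_right power2_norm_eq_inner[symmetric] power2_eq_square)
  also have "\<dots> \<le> norm (B e) * norm (x - Pi x)"
    using norm_blinfun[of "B e" "x - Pi x"] by (simp add: abs_le_D1)
  also have "\<dots> \<le> norm (B e) * (C * norm (J e))"
    using approx(3)[OF allI[OF x]] by (simp add: mult_left_mono)
  finally have "norm (J e) * norm (J e) \<le> C * norm (B e) * norm (J e)"
    by (simp add: algebra_simps)
  then show ?thesis
    using approx(2) by (cases "J e = 0") (auto simp: mult_le_cancel_right)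
qed

lemma reconstruction_error:
  fixes B :: "'y::real_normed_vector \<Rightarrow> ('x::{real_inner,complete_space} \<Rightarrow>\<^sub>L real)"
    and J :: "'y \<Rightarrow> 'h::real_inner" and Pi :: "'x \<Rightarrow> 'x"
  assumes B: "bounded_linear B" "bij B" "bounded_linear (inv B)" and J: "bounded_linear J"
    and U: "fd_subspace U" "dim U = dim X" "0 < cS"
      "\<And>u. u \<in> U \<Longrightarrow> u \<noteq> 0 \<Longrightarrow> cS * norm u \<le> (SUP x\<in>X - {0}. blinfun_apply u x / norm x)"
    and approx: "\<And>x. Pi x \<in> X" "0 \<le> C"
      "\<And>x w. (\<forall>y. blinfun_apply (B y) x = inner w (J y)) \<Longrightarrow> norm (x - Pi x) \<le> C * norm w"
    and u: "u \<in> U" "\<And>x. x \<in> X \<Longrightarrow> blinfun_apply u x = blinfun_apply (B y) x"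
  shows "norm (J (inv B u) - J y) \<le> C * (1 / cS + 1) * onorm B * norm y"
proof -
  have "B (inv B u - y) = u - B y"
    using B(2) by (simp add: linear_diff[OF bounded_linear.linear[OF B(1)]] bij_is_surj surj_f_inv_f)
  moreover have "blinfun_apply (u - B y) x = 0" if "x \<in> X" for x
    using u(2)[OF that] by (simp add: blinfun.diff_left)
  ultimately have "norm (J (inv B u - y)) \<le> C * norm (u - B y)"
    using duality_estimate[OF B(2,3) J approx, of "inv B u - y"] by simp
  also have "\<dots> \<le> C * (norm (B y) / cS + norm (B y))"
    using inf_sup_norm_le[OF U u] norm_triangle_ineq4[of u "B y"] approx(2)
    by (intro mult_left_mono) auto
  also have "\<dots> \<le> C * (onorm B * norm y / cS + onorm B * norm y)"
    using onorm[OF B(1), of y] U(3) approx(2)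
    by (intro mult_left_mono add_mono divide_right_mono) auto
  finally show ?thesis
    by (simp add: linear_diff[OF bounded_linear.linear[OF J]] algebra_simps)
qed

section \<open>Energy estimates for the Galerkin problem\<close>

lemma quadratic_le_imp_le:
  fixes x b c :: real
  assumes "x\<^sup>2 \<le> b * x + c\<^sup>2" "0 \<le> b" "0 \<le> c"
  shows "x \<le> b + c"
proof (rule ccontr)
  assume "\<not> x \<le> b + c"
  then have "b * x + c * c \<le> b * x + c * x"
    using assms(2,3) by (intro add_left_mono mult_left_mono) auto
  also have "\<dots> = (b + c) * x" by (simp add: algebra_simps)
  also have "\<dots> < x * x"
    using \<open>\<not> x \<le> b + c\<close> assms(2,3) by (intro mult_strict_right_mono) auto
  finally show False
    using assms(1) by (simp add: power2_eq_square)
qed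

lemma energy_absorption:
  fixes A E T c1 c2 :: real
  assumes "0 \<le> A" "0 \<le> E" "0 \<le> T" "0 \<le> c1" "0 \<le> c2"
    and energy: "A\<^sup>2 + E\<^sup>2 \<le> T * (E + c2 * T) + A * (c1 * T) + E * (c2 * T)"
  shows "A + E \<le> (3 + 2 * c1 + 3 * c2) * T"
proof -
  have "(A + E)\<^sup>2 \<le> 2 * (A\<^sup>2 + E\<^sup>2)"
    using zero_le_power2[of "A - E"] by (simp add: power2_sum power2_diff)
  also have "\<dots> \<le> 2 * (1 + c1 + c2) * T * (A + E) + 2 * c2 * T\<^sup>2"
  proof -
    have "0 \<le> T * A * (1 + c2) + T * E * c1"
      using assms(1-5) by simp
    with energy show ?thesis
      by (simp add: algebra_simps power2_eq_square)
  qed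
  also have "\<dots> \<le> 2 * (1 + c1 + c2) * T * (A + E) + ((1 + c2) * T)\<^sup>2"
  proof -
    have "((1 + c2) * T)\<^sup>2 - 2 * c2 * T\<^sup>2 = (1 + c2\<^sup>2) * T\<^sup>2"
      by (simp add: power2_eq_square algebra_simps)
    moreover have "0 \<le> (1 + c2\<^sup>2) * T\<^sup>2"
      by simp
    ultimately show ?thesis
      by linarith
  qed
  finally have "A + E \<le> 2 * (1 + c1 + c2) * T + (1 + c2) * T"
    by (rule quadratic_le_imp_le) (use assms in simp_all)
  then show ?thesis
    by (simp add: algebra_simps)
qed

locale positive_symmetric_form =
  fixes D :: "'y::real_normed_vector \<Rightarrow> ('y \<Rightarrow>\<^sub>L real)"
  assumes bounded_linear_form: "bounded_linear D"
    and symmetric: "\<And>y z. blinfun_apply (D y) z = blinfun_apply (D z) y"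
    and positive: "\<And>y. y \<noteq> 0 \<Longrightarrow> 0 < blinfun_apply (D y) y"
begin

sublocale bounded_linear D by (fact bounded_linear_form)

lemma form_nonneg: "0 \<le> blinfun_apply (D y) y"
  using positive[of y] by (cases "y = 0") (simp_all add: zero)

lemma Dnorm_nonneg: "0 \<le> Dnorm D y"
  by (simp add: Dnorm_def form_nonneg)

lemma Dnorm_squared: "(Dnorm D y)\<^sup>2 = blinfun_apply (D y) y"
  by (simp add: Dnorm_def form_nonneg)

lemma Dnorm_le_norm: "Dnorm D y \<le> sqrt (onorm D) * norm y"
proof -
  have "blinfun_apply (D y) y \<le> norm (D y) * norm y"
    using norm_blinfun[of "D y" y] by simp
  also have "\<dots> \<le> onorm D * norm y * norm y"
    using onorm[OF bounded_linear_form, of y] by (simp add: mult_right_mono)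
  finally have "Dnorm D y \<le> sqrt (onorm D * (norm y)\<^sup>2)"
    unfolding Dnorm_def by (simp add: power2_eq_square mult.assoc)
  then show ?thesis
    by (simp add: real_sqrt_mult)
qed

lemma Dnorm_Cauchy_Schwarz: "\<bar>blinfun_apply (D y) z\<bar> \<le> Dnorm D y * Dnorm D z"
proof (cases "y = 0 \<or> z = 0")
  case True
  then show ?thesis by (auto simp: Dnorm_def zero)
next
  case False
  define \<alpha> \<beta> where "\<alpha> = Dnorm D y" and "\<beta> = Dnorm D z"
  have "0 < \<alpha>" "0 < \<beta>"
    using positive False by (simp_all add: \<alpha>_def \<beta>_def Dnorm_def)
  have expand: "blinfun_apply (D (a *\<^sub>R y + b *\<^sub>R z)) (a *\<^sub>R y + b *\<^sub>R z)
      = a\<^sup>2 * blinfun_apply (D y) y + 2 * a * b * blinfun_apply (D y) z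
        + b\<^sup>2 * blinfun_apply (D z) z" for a b
    by (simp add: add scaleR blinfun.add_left blinfun.add_right
        blinfun.scaleR_left blinfun.scaleR_right symmetric[of z y] algebra_simps power2_eq_square)
  from form_nonneg[of "\<beta> *\<^sub>R y + \<alpha> *\<^sub>R z"] form_nonneg[of "\<beta> *\<^sub>R y + (- \<alpha>) *\<^sub>R z"]
  have "0 \<le> 2 * (\<alpha> * \<beta>) * (\<alpha> * \<beta> + blinfun_apply (D y) z)"
    and "0 \<le> 2 * (\<alpha> * \<beta>) * (\<alpha> * \<beta> - blinfun_apply (D y) z)"
    unfolding expand
    by (simp_all add: Dnorm_squared[symmetric] \<alpha>_def \<beta>_def algebra_simps power2_eq_square)
  moreover have "0 < 2 * (\<alpha> * \<beta>)"
    using \<open>0 < \<alpha>\<close> \<open>0 < \<beta>\<close> by simp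
  ultimately show ?thesis
    unfolding \<alpha>_def \<beta>_def by (simp add: zero_le_mult_iff abs_le_iff)
qed

lemma galerkin_stability:
  fixes J :: "'y \<Rightarrow> 'h::real_inner"
  assumes "y \<in> V"
    and galerkin: "\<And>z. z \<in> V \<Longrightarrow> inner (J y) (J z) + s\<^sup>2 * blinfun_apply (D y) z = inner ybar (J z)"
  shows "norm (J y) \<le> norm ybar" "s * Dnorm D y \<le> norm ybar"
proof -
  have "(norm (J y))\<^sup>2 + (s * Dnorm D y)\<^sup>2 = inner ybar (J y)"
    using galerkin[OF assms(1)] Dnorm_squared
    by (simp add: power2_norm_eq_inner power_mult_distrib)
  also have "\<dots> \<le> norm ybar * norm (J y)"
    by (rule Cauchy_Schwarz_ineq2[THEN abs_le_D1])
  finally have energy: "(norm (J y))\<^sup>2 + (s * Dnorm D y)\<^sup>2 \<le> norm ybar * norm (J y)" .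
  then have "norm (J y) * norm (J y) \<le> norm ybar * norm (J y)"
    using zero_le_power2[of "s * Dnorm D y"] unfolding power2_eq_square by linarith
  then show "norm (J y) \<le> norm ybar"
    using mult_right_le_imp_le[of "norm (J y)" "norm (J y)" "norm ybar"]
    by (cases "J y = 0") simp_all
  then have "norm ybar * norm (J y) \<le> (norm ybar)\<^sup>2"
    by (simp add: mult_left_mono power2_eq_square)
  with energy have "(s * Dnorm D y)\<^sup>2 \<le> (norm ybar)\<^sup>2"
    using zero_le_power2[of "norm (J y)"] by linarith
  then show "s * Dnorm D y \<le> norm ybar"
    by (rule power2_le_imp_le[OF _ norm_ge_zero])
qed

lemma galerkin_error_energy:
  fixes J :: "'y \<Rightarrow> 'h::real_inner"
  assumes J: "bounded_linear J" and V: "subspace V" "y \<in> V" "p \<in> V"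
    and galerkin: "\<And>z. z \<in> V \<Longrightarrow> inner (J y) (J z) + s\<^sup>2 * blinfun_apply (D y) z = inner (J yb) (J z)"
    and e: "e = y - yb" and q: "q = yb - p"
  shows "(norm (J e))\<^sup>2 + (s * Dnorm D e)\<^sup>2
    \<le> s * Dnorm D yb * (s * Dnorm D e + s * Dnorm D q) + norm (J e) * norm (J q)
      + s * Dnorm D e * (s * Dnorm D q)"
proof -
  interpret J: bounded_linear J by (fact J)
  have orth: "inner (J e) (J z) + s\<^sup>2 * blinfun_apply (D e) z = - (s\<^sup>2 * blinfun_apply (D yb) z)"
    if "z \<in> V" for z
    using galerkin[OF that]
    by (simp add: e J.diff diff blinfun.diff_left inner_diff_left algebra_simps)
  \<comment> \<open>test \<open>orth\<close> with the discrete part \<open>y - p\<close> of \<open>e = (y - p) - q\<close>\<close>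
  have "y - p \<in> V" "y - p = e + q"
    using V by (simp_all add: subspace_diff e q)
  have "(norm (J e))\<^sup>2 + (s * Dnorm D e)\<^sup>2 = inner (J e) (J e) + s\<^sup>2 * blinfun_apply (D e) e"
    by (simp add: power2_norm_eq_inner power_mult_distrib Dnorm_squared)
  also have "\<dots> = (inner (J e) (J (y - p)) + s\<^sup>2 * blinfun_apply (D e) (y - p))
      - inner (J e) (J q) - s\<^sup>2 * blinfun_apply (D e) q"
    unfolding \<open>y - p = e + q\<close> by (simp add: J.add inner_add_right blinfun.add_right algebra_simps)
  also have "\<dots> = - (s\<^sup>2 * blinfun_apply (D yb) e) - s\<^sup>2 * blinfun_apply (D yb) q
      - inner (J e) (J q) - s\<^sup>2 * blinfun_apply (D e) q"
    by (simp only: orth[OF \<open>y - p \<in> V\<close>])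
      (simp add: \<open>y - p = e + q\<close> blinfun.add_right algebra_simps)
  also have "\<dots> \<le> s\<^sup>2 * (Dnorm D yb * Dnorm D e) + s\<^sup>2 * (Dnorm D yb * Dnorm D q)
      + norm (J e) * norm (J q) + s\<^sup>2 * (Dnorm D e * Dnorm D q)"
  proof -
    have "- (s\<^sup>2 * blinfun_apply (D a) b) \<le> s\<^sup>2 * (Dnorm D a * Dnorm D b)" for a b
      using mult_left_mono[OF abs_le_D2[OF Dnorm_Cauchy_Schwarz[of a b]] zero_le_power2[of s]]
      by simp
    from this[of yb e] this[of yb q] this[of e q]
      abs_le_D2[OF Cauchy_Schwarz_ineq2[of "J e" "J q"]]
    show ?thesis by linarith
  qed
  also have "\<dots> = s * Dnorm D yb * (s * Dnorm D e + s * Dnorm D q) + norm (J e) * norm (J q)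
      + s * Dnorm D e * (s * Dnorm D q)"
    by (simp add: power2_eq_square algebra_simps)
  finally show ?thesis .
qed

lemma galerkin_error:
  fixes J :: "'y \<Rightarrow> 'h::real_inner"
  assumes J: "bounded_linear J" and V: "subspace V" "y \<in> V" "p \<in> V"
    and galerkin: "\<And>z. z \<in> V \<Longrightarrow> inner (J y) (J z) + s\<^sup>2 * blinfun_apply (D y) z = inner (J yb) (J z)"
    and approx: "norm (J (yb - p)) \<le> c1 * s * Dnorm D yb" "Dnorm D (yb - p) \<le> c2 * Dnorm D yb"
    and "0 \<le> s" "0 \<le> c1" "0 \<le> c2"
  shows "norm (J (y - yb)) + s * Dnorm D (y - yb) \<le> (3 + 2 * c1 + 3 * c2) * (s * Dnorm D yb)"
proof (rule energy_absorption)
  define A E T where "A = norm (J (y - yb))" and "E = s * Dnorm D (y - yb)" and "T = s * Dnorm D yb"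
  have "0 \<le> A" "0 \<le> E" "0 \<le> T"
    using \<open>0 \<le> s\<close> by (simp_all add: A_def E_def T_def Dnorm_nonneg)
  have "A\<^sup>2 + E\<^sup>2 \<le> T * (E + s * Dnorm D (yb - p)) + A * norm (J (yb - p)) + E * (s * Dnorm D (yb - p))"
    using galerkin_error_energy[OF J V galerkin refl refl] by (simp add: A_def E_def T_def)
  also have "\<dots> \<le> T * (E + c2 * T) + A * (c1 * T) + E * (c2 * T)"
  proof -
    have "s * Dnorm D (yb - p) \<le> c2 * T"
      using mult_left_mono[OF approx(2) \<open>0 \<le> s\<close>] by (simp add: T_def algebra_simps)
    moreover have "norm (J (yb - p)) \<le> c1 * T"
      using approx(1) by (simp add: T_def algebra_simps)
    ultimately show ?thesis
      using \<open>0 \<le> A\<close> \<open>0 \<le> E\<close> \<open>0 \<le> T\<close> by (intro add_mono mult_left_mono) auto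
  qed
  finally show "A\<^sup>2 + E\<^sup>2 \<le> T * (E + c2 * T) + A * (c1 * T) + E * (c2 * T)" .
qed (use \<open>0 \<le> s\<close> \<open>0 \<le> c1\<close> \<open>0 \<le> c2\<close> in \<open>simp_all add: Dnorm_nonneg\<close>)

end

locale elliptic_form =
  fixes D :: "'y::real_normed_vector \<Rightarrow> ('y \<Rightarrow>\<^sub>L real)" and cD :: real
  assumes bounded_linear_form: "bounded_linear D"
    and symmetric: "\<And>y z. blinfun_apply (D y) z = blinfun_apply (D z) y"
    and elliptic_const: "0 < cD"
    and elliptic: "\<And>y. cD * (norm y)\<^sup>2 \<le> blinfun_apply (D y) y"

sublocale elliptic_form \<subseteq> positive_symmetric_form
proof (rule positive_symmetric_form.intro[OF bounded_linear_form symmetric])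
  show "0 < blinfun_apply (D y) y" if "y \<noteq> 0" for y
    using elliptic[of y] mult_pos_pos[OF elliptic_const, of "(norm y)\<^sup>2"] that by simp
qed

context elliptic_form
begin

lemma norm_le_Dnorm: "norm y \<le> Dnorm D y / sqrt cD"
proof -
  have "sqrt cD * norm y \<le> Dnorm D y"
    using real_sqrt_le_mono[OF elliptic[of y]] elliptic_const
    by (simp add: Dnorm_def real_sqrt_mult)
  then show ?thesis
    using elliptic_const by (simp add: field_simps mult.commute)
qed

lemma perturbed_galerkin_bound:
  fixes J :: "'y \<Rightarrow> 'h::real_inner"
  assumes "y \<in> V"
    and galerkin: "\<And>z. z \<in> V \<Longrightarrow> inner (J y) (J z) + s\<^sup>2 * blinfun_apply (D y) z = inner ybar (J z)"
    and perturbation: "norm (r - J y) \<le> CB * (s * norm y)" and "0 \<le> CB" "0 \<le> s"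
  shows "norm (r - ybar) \<le> (CB / sqrt cD + 2) * norm ybar"
proof -
  note stability = galerkin_stability[OF \<open>y \<in> V\<close> galerkin]
  have "s * norm y \<le> s * Dnorm D y / sqrt cD"
    using mult_left_mono[OF norm_le_Dnorm[of y] \<open>0 \<le> s\<close>] by simp
  also have "\<dots> \<le> norm ybar / sqrt cD"
    using stability(2) elliptic_const by (simp add: divide_right_mono)
  finally have "CB * (s * norm y) \<le> CB * (norm ybar / sqrt cD)"
    using \<open>0 \<le> CB\<close> by (rule mult_left_mono)
  moreover have "norm (r - ybar) \<le> norm (r - J y) + norm (J y) + norm ybar"
    using norm_triangle_ineq4[of "J y" ybar] norm_triangle_ineq[of "r - J y" "J y - ybar"] by simp
  ultimately show ?thesis
    using perturbation stability(1) by (simp add: algebra_simps)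
qed

lemma perturbed_galerkin_bound_smooth:
  fixes J :: "'y \<Rightarrow> 'h::real_inner"
  assumes J: "bounded_linear J" and V: "subspace V" "y \<in> V" "p \<in> V"
    and galerkin: "\<And>z. z \<in> V \<Longrightarrow> inner (J y) (J z) + s\<^sup>2 * blinfun_apply (D y) z = inner (J yb) (J z)"
    and approx: "norm (J (yb - p)) \<le> c1 * s * Dnorm D yb" "Dnorm D (yb - p) \<le> c2 * Dnorm D yb"
    and perturbation: "norm (r - J y) \<le> CB * (s * norm y)"
    and "0 \<le> CB" "0 \<le> s" "0 \<le> c1" "0 \<le> c2"
  shows "norm (r - J yb)
    \<le> ((CB / sqrt cD + 1) * (3 + 2 * c1 + 3 * c2) * sqrt (onorm D) + CB) * (s * norm yb)"
proof -
  define K where "K = (3 + 2 * c1 + 3 * c2) * sqrt (onorm D)"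
  have "norm (J (y - yb)) + s * Dnorm D (y - yb) \<le> (3 + 2 * c1 + 3 * c2) * (s * Dnorm D yb)"
    using galerkin_error[OF J V galerkin approx] assms(9-) by simp
  also have "\<dots> \<le> K * (s * norm yb)"
    using mult_left_mono[OF Dnorm_le_norm[of yb], of "(3 + 2 * c1 + 3 * c2) * s"] assms(9-)
    by (simp add: K_def algebra_simps)
  finally have error: "norm (J (y - yb)) \<le> K * (s * norm yb)" "s * Dnorm D (y - yb) \<le> K * (s * norm yb)"
    using mult_nonneg_nonneg[OF \<open>0 \<le> s\<close> Dnorm_nonneg[of "y - yb"]] norm_ge_zero[of "J (y - yb)"]
    by linarith+
  have "norm y \<le> Dnorm D (y - yb) / sqrt cD + norm yb"
    using norm_le_Dnorm[of "y - yb"] norm_triangle_ineq[of "y - yb" yb] by simp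
  then have "s * norm y \<le> s * Dnorm D (y - yb) / sqrt cD + s * norm yb"
    using mult_left_mono[OF _ \<open>0 \<le> s\<close>] by (fastforce simp: distrib_left)
  also have "\<dots> \<le> K * (s * norm yb) / sqrt cD + s * norm yb"
    using error(2) elliptic_const by (simp add: divide_right_mono)
  finally have "CB * (s * norm y) \<le> CB * (K * (s * norm yb) / sqrt cD + s * norm yb)"
    using \<open>0 \<le> CB\<close> by (rule mult_left_mono)
  moreover have "norm (r - J yb) \<le> norm (r - J y) + norm (J (y - yb))"
    using norm_triangle_ineq[of "r - J y" "J y - J yb"]
    by (simp add: linear_diff[OF bounded_linear.linear[OF J]])
  ultimately have "norm (r - J yb) \<le> CB * (K * (s * norm yb) / sqrt cD + s * norm yb) + K * (s * norm yb)"
    using perturbation error(1) by linarith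
  also have "\<dots> = ((CB / sqrt cD + 1) * K + CB) * (s * norm yb)"
    by (simp add: algebra_simps)
  finally show ?thesis
    by (simp add: K_def mult.assoc)
qed

end

theorem mainTheorem5:
  fixes JX :: "'x::{real_inner,complete_space} \<Rightarrow> 'hx::{real_inner,complete_space}"
    and JY :: "'y::{real_inner,complete_space} \<Rightarrow> 'hy::{real_inner,complete_space}"
    and B :: "'y \<Rightarrow> ('x \<Rightarrow>\<^sub>L real)"
    and D :: "'y \<Rightarrow> ('y \<Rightarrow>\<^sub>L real)"
    and Yh :: "real \<Rightarrow> 'y set" and P :: "real \<Rightarrow> 'y \<Rightarrow> 'y"
    and Uh :: "real \<Rightarrow> ('x \<Rightarrow>\<^sub>L real) set" and Xh :: "real \<Rightarrow> 'x set"
    and Pi :: "real \<Rightarrow> 'x \<Rightarrow> 'x"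
    and \<alpha> h0 c1 c2 cS cPi :: real
  assumes gelfX: "gelfand_embedding JX"
    and gelfY: "gelfand_embedding JY"
    and B_lin: "bounded_linear B" and B_bij: "bij B" and Binv_lin: "bounded_linear (inv B)"
    and D_lin: "bounded_linear D"
    and D_sym: "\<And>y z. blinfun_apply (D y) z = blinfun_apply (D z) y"
    and D_ell: "\<exists>cD>0. \<forall>y. cD * (norm y)\<^sup>2 \<le> blinfun_apply (D y) y"
    and h0_pos: "h0 > 0" and \<alpha>_pos: "\<alpha> > 0"
    and c1_pos: "c1 > 0" and c2_pos: "c2 > 0" and cS_pos: "cS > 0" and cPi_pos: "cPi > 0"
    and Yh_fd: "\<And>h. 0 < h \<Longrightarrow> h \<le> h0 \<Longrightarrow> fd_subspace (Yh h)"
    and P_in: "\<And>h y. 0 < h \<Longrightarrow> h \<le> h0 \<Longrightarrow> P h y \<in> Yh h"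
    and P_HY: "\<And>h y. 0 < h \<Longrightarrow> h \<le> h0 \<Longrightarrow>
                 norm (JY (y - P h y)) \<le> c1 * h powr \<alpha> * Dnorm D y"
    and P_D: "\<And>h y. 0 < h \<Longrightarrow> h \<le> h0 \<Longrightarrow> Dnorm D (y - P h y) \<le> c2 * Dnorm D y"
    and Uh_fd: "\<And>h. 0 < h \<Longrightarrow> h \<le> h0 \<Longrightarrow> fd_subspace (Uh h)"
    and Xh_fd: "\<And>h. 0 < h \<Longrightarrow> h \<le> h0 \<Longrightarrow> fd_subspace (Xh h)"
    and dim_eq: "\<And>h. 0 < h \<Longrightarrow> h \<le> h0 \<Longrightarrow> dim (Uh h) = dim (Xh h)"
    and infsup: "\<And>h u. 0 < h \<Longrightarrow> h \<le> h0 \<Longrightarrow> u \<in> Uh h \<Longrightarrow> u \<noteq> 0 \<Longrightarrow>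
                 cS * norm u \<le> (SUP x\<in>Xh h - {0}. blinfun_apply u x / norm x)"
    and Pi_in: "\<And>h x. 0 < h \<Longrightarrow> h \<le> h0 \<Longrightarrow> Pi h x \<in> Xh h"
    and Pi_approx: "\<And>h x w. 0 < h \<Longrightarrow> h \<le> h0 \<Longrightarrow>
                 (\<forall>y. blinfun_apply (B y) x = inner w (JY y)) \<Longrightarrow>
                 norm (x - Pi h x) \<le> cPi * h powr \<alpha> * norm w"
  shows "\<exists>c>0. \<forall>h ybar y\<rho>h ut.
           0 < h \<and> h \<le> h0 \<and>
           y\<rho>h \<in> Yh h \<and>
           (\<forall>z\<in>Yh h. inner (JY y\<rho>h) (JY z) + h powr (2 * \<alpha>) * blinfun_apply (D y\<rho>h) z
                        = inner ybar (JY z)) \<and>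
           ut \<in> Uh h \<and>
           (\<forall>x\<in>Xh h. blinfun_apply ut x = blinfun_apply (B y\<rho>h) x)
           \<longrightarrow> norm (JY (inv B ut) - ybar) \<le> c * norm ybar \<and>
               (\<forall>yb. ybar = JY yb \<longrightarrow> norm (JY (inv B ut) - ybar) \<le> c * h powr \<alpha> * norm yb)"
proof -
  obtain cD where cD: "0 < cD" "\<And>y. cD * (norm y)\<^sup>2 \<le> blinfun_apply (D y) y"
    using D_ell by blast
  with D_lin D_sym interpret D: elliptic_form D cD
    by (rule elliptic_form.intro)
  have JY: "bounded_linear JY"
    using gelfY by (simp add: gelfand_embedding_def)
  define CB where "CB = cPi * (1 / cS + 1) * onorm B"
  define c_rough where "c_rough = CB / sqrt cD + 2"
  define c_smooth where "c_smooth = (CB / sqrt cD + 1) * (3 + 2 * c1 + 3 * c2) * sqrt (onorm D) + CB"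
  have "0 \<le> CB"
    using cPi_pos cS_pos onorm_pos_le[OF B_lin] by (simp add: CB_def)
  then have "0 < c_rough" "0 \<le> c_smooth"
    using cD(1) c1_pos c2_pos onorm_pos_le[OF D_lin]
    by (simp_all add: c_rough_def c_smooth_def add_nonneg_pos)
  show ?thesis
  proof (intro exI[of _ "c_rough + c_smooth"] conjI allI impI)
    show "0 < c_rough + c_smooth"
      using \<open>0 < c_rough\<close> \<open>0 \<le> c_smooth\<close> by linarith
    fix h ybar y ut
    assume "0 < h \<and> h \<le> h0 \<and> y \<in> Yh h \<and>
      (\<forall>z\<in>Yh h. inner (JY y) (JY z) + h powr (2 * \<alpha>) * blinfun_apply (D y) z = inner ybar (JY z)) \<and>
      ut \<in> Uh h \<and> (\<forall>x\<in>Xh h. blinfun_apply ut x = blinfun_apply (B y) x)"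
    then have h: "0 < h" "h \<le> h0" and y: "y \<in> Yh h" and ut: "ut \<in> Uh h"
        "\<And>x. x \<in> Xh h \<Longrightarrow> blinfun_apply ut x = blinfun_apply (B y) x"
      and galerkin: "\<And>z. z \<in> Yh h \<Longrightarrow>
        inner (JY y) (JY z) + (h powr \<alpha>)\<^sup>2 * blinfun_apply (D y) z = inner ybar (JY z)"
      by (auto simp: power2_eq_square powr_add[symmetric])
    have reconstruction: "norm (JY (inv B ut) - JY y) \<le> CB * (h powr \<alpha> * norm y)"
      using reconstruction_error[OF B_lin B_bij Binv_lin JY Uh_fd[OF h] dim_eq[OF h] cS_pos
          infsup[OF h] Pi_in[OF h] _ Pi_approx[OF h] ut] cPi_pos
      by (simp add: CB_def algebra_simps)
    have "norm (JY (inv B ut) - ybar) \<le> c_rough * norm ybar"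
      using D.perturbed_galerkin_bound[OF y galerkin reconstruction \<open>0 \<le> CB\<close>] by (simp add: c_rough_def)
    then show "norm (JY (inv B ut) - ybar) \<le> (c_rough + c_smooth) * norm ybar"
      by (rule order_trans) (use \<open>0 \<le> c_smooth\<close> in \<open>simp add: mult_right_mono\<close>)
    fix yb assume "ybar = JY yb"
    have "subspace (Yh h)"
      using Yh_fd[OF h] by (simp add: fd_subspace_def)
    from D.perturbed_galerkin_bound_smooth[OF JY this y P_in[OF h] galerkin[unfolded \<open>ybar = JY yb\<close>]
        P_HY[OF h] P_D[OF h] reconstruction \<open>0 \<le> CB\<close>] c1_pos c2_pos
    have "norm (JY (inv B ut) - ybar) \<le> c_smooth * (h powr \<alpha> * norm yb)"
      using \<open>ybar = JY yb\<close> by (simp add: c_smooth_def)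
    then show "norm (JY (inv B ut) - ybar) \<le> (c_rough + c_smooth) * h powr \<alpha> * norm yb"
      by (rule order_trans) (use \<open>0 < c_rough\<close> in \<open>simp add: mult.assoc mult_right_mono\<close>)
  qed
qed

end
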